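(* Let $C$ be a Pauli-Square-Root Clifford and $P$ a Pauli, both acting on the same $t$ qubits. Then there is a $t$-qubit Pauli $Q$ such that $$C(C)\,(I\otimes P)=C(Q)\,(I\otimes P)\,C(C),$$ where the first tensor factor is a single control qubit; moreover $Q$ either commutes or anticommutes with $C$, and $\mathrm{Supp}(Q)\subseteq\mathrm{Supp}(C)$.
   Context: Paulis are tensor products of $I,X,Y,Z$ times a phase in $\{\pm1,\pm i\}$; a Clifford is a unitary mapping Paulis to Paulis under conjugation. A Pauli-Square-Root Clifford (PSC) is a Clifford that is not a Pauli and whose square is a Pauli. For a unitary $U$ on $t$ qubits, $C(U)=|0\rangle\langle0|\otimes I+|1\rangle\langle1|\otimes U$ on $1+t$ qubits (control first). $\mathrm{Supp}(W)$ denotes the set of qubits on which an operator $W$ acts nontrivially. *)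

theory Defs
  imports Complex_Main "Jordan_Normal_Form.Matrix"
begin

text \<open>Operators on t qubits are complex 2^t x 2^t matrices. Basis index r < 2^t;
  the state of qubit j in basis index r is bit j of r.\<close>

definition qbit :: "nat \<Rightarrow> nat \<Rightarrow> nat" where
  "qbit j r = (r div 2 ^ j) mod 2"

definition adj :: "complex mat \<Rightarrow> complex mat" where
  "adj M = mat (dim_col M) (dim_row M) (\<lambda>(i, j). cnj (M $$ (j, i)))"

definition unitary_op :: "nat \<Rightarrow> complex mat \<Rightarrow> bool" where
  "unitary_op t U \<longleftrightarrow> U \<in> carrier_mat (2 ^ t) (2 ^ t) \<and> U * adj U = 1\<^sub>m (2 ^ t)
      \<and> adj U * U = 1\<^sub>m (2 ^ t)"

text \<open>Single-qubit Pauli matrices: 0 = I, 1 = X, 2 = Y, 3 = Z; entries (a,b).\<close>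
definition pauli1 :: "nat \<Rightarrow> nat \<Rightarrow> nat \<Rightarrow> complex" where
  "pauli1 k a b =
     (if k = 0 then (if a = b then 1 else 0)
      else if k = 1 then (if a \<noteq> b then 1 else 0)
      else if k = 2 then (if a = 0 \<and> b = 1 then - \<i> else if a = 1 \<and> b = 0 then \<i> else 0)
      else (if a = b then (if a = 0 then 1 else -1) else 0))"

text \<open>Tensor product of single-qubit Paulis p 0, ..., p (t-1).\<close>
definition pauli_string :: "nat \<Rightarrow> (nat \<Rightarrow> nat) \<Rightarrow> complex mat" where
  "pauli_string t p = mat (2 ^ t) (2 ^ t)
      (\<lambda>(r, c). \<Prod>j<t. pauli1 (p j) (qbit j r) (qbit j c))"

definition is_pauli :: "nat \<Rightarrow> complex mat \<Rightarrow> bool" where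
  "is_pauli t M \<longleftrightarrow> (\<exists>c p. c \<in> {1, -1, \<i>, - \<i>} \<and> (\<forall>j<t. p j < 4) \<and>
      M = c \<cdot>\<^sub>m pauli_string t p)"

definition is_clifford :: "nat \<Rightarrow> complex mat \<Rightarrow> bool" where
  "is_clifford t U \<longleftrightarrow> unitary_op t U \<and>
      (\<forall>P. is_pauli t P \<longrightarrow> is_pauli t (U * P * adj U))"

definition is_PSC :: "nat \<Rightarrow> complex mat \<Rightarrow> bool" where
  "is_PSC t C \<longleftrightarrow> is_clifford t C \<and> \<not> is_pauli t C \<and> is_pauli t (C * C)"

text \<open>Controlled unitary on 1+t qubits, control qubit first (most significant):
  C(U) = |0><0| (x) I + |1><1| (x) U.\<close>
definition ctrl :: "nat \<Rightarrow> complex mat \<Rightarrow> complex mat" where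
  "ctrl t U = four_block_mat (1\<^sub>m (2 ^ t)) (0\<^sub>m (2 ^ t) (2 ^ t)) (0\<^sub>m (2 ^ t) (2 ^ t)) U"

text \<open>I (x) W on 1+t qubits, identity on the control qubit.\<close>
definition id_tensor :: "nat \<Rightarrow> complex mat \<Rightarrow> complex mat" where
  "id_tensor t W = four_block_mat W (0\<^sub>m (2 ^ t) (2 ^ t)) (0\<^sub>m (2 ^ t) (2 ^ t)) W"

definition del_bit :: "nat \<Rightarrow> nat \<Rightarrow> nat" where
  "del_bit j r = (r div 2 ^ (j + 1)) * 2 ^ j + r mod 2 ^ j"

text \<open>W' on the other t-1 qubits, tensored with identity on qubit j.\<close>
definition tensor_id_at :: "nat \<Rightarrow> nat \<Rightarrow> complex mat \<Rightarrow> complex mat" where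
  "tensor_id_at t j W' = mat (2 ^ t) (2 ^ t)
      (\<lambda>(r, c). if qbit j r = qbit j c then W' $$ (del_bit j r, del_bit j c) else 0)"

definition acts_trivially_on :: "nat \<Rightarrow> nat \<Rightarrow> complex mat \<Rightarrow> bool" where
  "acts_trivially_on t j W \<longleftrightarrow>
     (\<exists>W' \<in> carrier_mat (2 ^ (t - 1)) (2 ^ (t - 1)). W = tensor_id_at t j W')"

definition Supp :: "nat \<Rightarrow> complex mat \<Rightarrow> nat set" where
  "Supp t W = {j. j < t \<and> \<not> acts_trivially_on t j W}"

end

theory Submission
  imports Defs
begin

text \<open>Take Q = C P C\<dagger> P\<dagger>, the commutator of C and P. It is a Pauli because C is a Clifford,
  and Q P C = C P, which is exactly the identity of the lower right blocks of the two controlled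
  operators (the upper left blocks are both P). Both Q C and C Q equal P C P\<dagger> up to sign,
  since Paulis are Hermitian up to sign and C C, being a Pauli, commutes with P up to sign.
  Finally, if C acts trivially on qubit j, then C commutes with X and Z on qubit j while P
  commutes with them up to sign, so the signs cancel in Q; an operator commuting with X and Z
  on qubit j acts trivially there.\<close>

section \<open>Bits of basis indices\<close>

lemma qbit_eq_of_bool: "qbit j r = of_bool (bit r j)"
  by (simp add: qbit_def bit_iff_odd odd_iff_mod_2_eq_one)

lemma qbit_less_2: "qbit j r < 2"
  by (simp add: qbit_def)

lemma qbit_cases: obtains "qbit j r = 0" | "qbit j r = 1"
  using qbit_less_2[of j r] by linarith

lemma nat_less_two_power_iff_bits: "(n::nat) < 2 ^ m \<longleftrightarrow> (\<forall>i\<ge>m. \<not> bit n i)"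
proof -
  have "take_bit m n = n \<longleftrightarrow> (\<forall>i\<ge>m. \<not> bit n i)"
    by (metis bit_take_bit_iff bit_eq_iff not_le)
  then show ?thesis by (simp add: take_bit_nat_eq_self_iff)
qed

lemma eq_if_qbits_eq:
  assumes "r < 2 ^ t" "c < 2 ^ t" "\<forall>i<t. qbit i r = qbit i c"
  shows "r = c"
  using assms by (intro bit_eqI) (metis nat_less_two_power_iff_bits qbit_eq_of_bool of_bool_eq_iff not_le)

lemma qbit_flip_bit: "qbit i (flip_bit j r) = (if i = j then 1 - qbit j r else qbit i r)"
  by (simp add: qbit_eq_of_bool bit_flip_bit_iff)

lemma flip_bit_flip_bit [simp]: "flip_bit j (flip_bit j r) = (r::nat)"
  by (rule bit_eqI) (auto simp: bit_flip_bit_iff)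

lemma flip_bit_less: "j < t \<Longrightarrow> (r::nat) < 2 ^ t \<Longrightarrow> flip_bit j r < 2 ^ t"
  by (auto simp: nat_less_two_power_iff_bits bit_flip_bit_iff)

lemma bit_del_bit: "bit (del_bit j r) i \<longleftrightarrow> (if i < j then bit r i else bit r (Suc i))"
proof -
  have "del_bit j r = push_bit j (drop_bit (Suc j) r) + take_bit j r"
    by (simp add: del_bit_def push_bit_eq_mult drop_bit_eq_div take_bit_eq_mod)
  then show ?thesis
    by (auto simp: bit_disjunctive_add_iff bit_simps)
qed

lemma del_bit_flip_bit: "del_bit j (flip_bit j r) = del_bit j r"
  by (rule bit_eqI) (auto simp: bit_del_bit bit_flip_bit_iff)

lemma del_bit_less: "j < t \<Longrightarrow> r < 2 ^ t \<Longrightarrow> del_bit j r < 2 ^ (t - 1)"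
  by (auto simp: nat_less_two_power_iff_bits bit_del_bit)

definition insert_zero_bit :: "nat \<Rightarrow> nat \<Rightarrow> nat" where
  "insert_zero_bit j a = push_bit (Suc j) (drop_bit j a) + take_bit j a"

lemma bit_push_bit_Suc_drop_bit:
  "bit (push_bit (Suc j) (drop_bit j a)) i \<longleftrightarrow> j < i \<and> bit (a::nat) (i - 1)"
  unfolding bit_push_bit_iff_nat bit_drop_bit_eq comp_def
  by (metis Suc_diff_Suc Suc_le_eq add_Suc_right diff_Suc_1 le_add_diff_inverse less_imp_le_nat)

lemma bit_insert_zero_bit:
  "bit (insert_zero_bit j a) i \<longleftrightarrow> (if i < j then bit a i else i \<noteq> j \<and> bit a (i - 1))"
proof -
  have disjoint: "\<not> bit (push_bit (Suc j) (drop_bit j a)) n \<or> \<not> bit (take_bit j a) n" for n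
    unfolding bit_push_bit_Suc_drop_bit bit_take_bit_iff by auto
  show ?thesis
    unfolding insert_zero_bit_def bit_disjunctive_add_iff[OF disjoint]
      bit_push_bit_Suc_drop_bit bit_take_bit_iff by auto
qed

lemma insert_zero_bit_del_bit: "insert_zero_bit j (del_bit j r) = unset_bit j r"
  by (rule bit_eqI) (auto simp: bit_insert_zero_bit bit_del_bit bit_unset_bit_iff)

lemma unset_bit_eq_flip_bit: "qbit j r = 1 \<Longrightarrow> unset_bit j r = flip_bit j r"
  by (rule bit_eqI) (auto simp: bit_unset_bit_iff bit_flip_bit_iff qbit_eq_of_bool)

lemma unset_bit_eq_self: "qbit j r = 0 \<Longrightarrow> unset_bit j r = r"
  by (rule bit_eqI) (auto simp: bit_unset_bit_iff qbit_eq_of_bool)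

lemma sum_prod_qbit:
  fixes f :: "nat \<Rightarrow> nat \<Rightarrow> 'a::comm_ring_1"
  shows "(\<Sum>k<2 ^ t. \<Prod>j<t. f j (qbit j k)) = (\<Prod>j<t. f j 0 + f j 1)"
proof (induction t arbitrary: f)
  case 0
  then show ?case by simp
next
  case (Suc t)
  have qbit_0: "qbit 0 k = k mod 2" and qbit_Suc: "qbit (Suc j) k = qbit j (k div 2)" for j k
    by (simp_all add: qbit_def div_mult2_eq)
  have sum_even_odd: "(\<Sum>k<2 * n. g k) = (\<Sum>m<n. g (2 * m) + g (2 * m + 1))"
    for n and g :: "nat \<Rightarrow> 'a"
    by (induction n) (auto simp: algebra_simps)
  have "(\<Sum>k<2 ^ Suc t. \<Prod>j<Suc t. f j (qbit j k))
      = (\<Sum>k<2 * 2 ^ t. f 0 (k mod 2) * (\<Prod>j<t. f (Suc j) (qbit j (k div 2))))"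
    by (simp only: prod.lessThan_Suc_shift qbit_0 qbit_Suc power_Suc)
  also have "\<dots> = (\<Sum>m<2 ^ t. (f 0 0 + f 0 1) * (\<Prod>j<t. f (Suc j) (qbit j m)))"
    using sum_even_odd[where n="2 ^ t" and g="\<lambda>k. f 0 (k mod 2) * (\<Prod>j<t. f (Suc j) (qbit j (k div 2)))"]
    by (simp add: algebra_simps odd_two_times_div_two_nat mod_Suc)
  also have "\<dots> = (f 0 0 + f 0 1) * (\<Prod>j<t. f (Suc j) 0 + f (Suc j) 1)"
    using Suc.IH[of "\<lambda>j. f (Suc j)"] by (simp add: sum_distrib_left[symmetric])
  also have "\<dots> = (\<Prod>j<Suc t. f j 0 + f j 1)"
    by (simp only: prod.lessThan_Suc_shift)
  finally show ?case .
qed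

section \<open>Scalars, products and adjoints of matrices\<close>

lemma prod_mem_if_mult_closed:
  assumes "1 \<in> S" "\<And>x y. x \<in> S \<Longrightarrow> y \<in> S \<Longrightarrow> x * y \<in> S" "\<And>j. j \<in> A \<Longrightarrow> f j \<in> S"
  shows "prod f A \<in> S"
  using assms(3) by (induction A rule: infinite_finite_induct) (auto intro: assms(1,2))

lemma smult_smult_mat: "a \<cdot>\<^sub>m (b \<cdot>\<^sub>m A) = (a * b) \<cdot>\<^sub>m (A :: 'a::comm_ring_1 mat)"
  by (rule eq_matI) auto

lemma one_smult_mat [simp]: "(1::'a::comm_ring_1) \<cdot>\<^sub>m A = A"
  by (rule eq_matI) auto

lemma neg_one_smult_mat: "(-1::'a::comm_ring_1) \<cdot>\<^sub>m A = - A"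
  by (rule eq_matI) auto

lemma smult_mult_smult_mat:
  assumes "A \<in> carrier_mat n k" "B \<in> carrier_mat k m"
  shows "(a \<cdot>\<^sub>m A) * (b \<cdot>\<^sub>m B) = (a * b) \<cdot>\<^sub>m (A * (B :: 'a::comm_ring_1 mat))"
proof -
  have "(a \<cdot>\<^sub>m A) * (b \<cdot>\<^sub>m B) = a \<cdot>\<^sub>m (A * (b \<cdot>\<^sub>m B))"
    using assms by (intro mult_smult_assoc_mat) auto
  also have "\<dots> = (a * b) \<cdot>\<^sub>m (A * B)"
    using assms by (simp add: mult_smult_distrib smult_smult_mat)
  finally show ?thesis .
qed

lemma square_mat_mult_closed:
  "A \<in> carrier_mat n n \<Longrightarrow> B \<in> carrier_mat n n \<Longrightarrow> A * B \<in> carrier_mat n n"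
  by simp

lemma square_mat_mult_assoc:
  "A \<in> carrier_mat n n \<Longrightarrow> B \<in> carrier_mat n n \<Longrightarrow> D \<in> carrier_mat n n \<Longrightarrow> A * B * D = A * (B * D)"
  by simp

lemma dim_adj [simp]: "dim_row (adj A) = dim_col A" "dim_col (adj A) = dim_row A"
  by (simp_all add: adj_def)

lemma adj_carrier_mat [simp]: "A \<in> carrier_mat n m \<Longrightarrow> adj A \<in> carrier_mat m n"
  by (metis dim_adj carrier_matD carrier_matI)

lemma index_adj [simp]: "i < dim_col A \<Longrightarrow> j < dim_row A \<Longrightarrow> adj A $$ (i, j) = cnj (A $$ (j, i))"
  by (simp add: adj_def)

lemma adj_adj [simp]: "adj (adj A) = A"
  by (rule eq_matI) auto

lemma adj_smult: "adj (c \<cdot>\<^sub>m A) = cnj c \<cdot>\<^sub>m adj A"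
  by (rule eq_matI) auto

lemma adj_mult:
  assumes "A \<in> carrier_mat n k" "B \<in> carrier_mat k m"
  shows "adj (A * B) = adj B * adj A"
  using assms by (intro eq_matI) (auto simp: scalar_prod_def row_def col_def mult.commute)

lemma mult_commute_sign_mult:
  fixes A B X :: "'a::comm_ring_1 mat"
  assumes A: "A \<in> carrier_mat n n" and B: "B \<in> carrier_mat n n" and X: "X \<in> carrier_mat n n"
    and "A * X = a \<cdot>\<^sub>m (X * A)" and "B * X = b \<cdot>\<^sub>m (X * B)"
  shows "(A * B) * X = (a * b) \<cdot>\<^sub>m (X * (A * B))"
proof -
  have "(A * B) * X = A * (b \<cdot>\<^sub>m (X * B))"
    using A B X assms(5) by simp
  also have "\<dots> = b \<cdot>\<^sub>m ((A * X) * B)"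
    using A B X by (simp add: mult_smult_distrib[of _ n n _ n])
  also have "\<dots> = b \<cdot>\<^sub>m ((a \<cdot>\<^sub>m (X * A)) * B)"
    using assms(4) by simp
  also have "\<dots> = (a * b) \<cdot>\<^sub>m (X * (A * B))"
    using A B X by (simp add: mult_smult_assoc_mat[of _ n n _ n] smult_smult_mat mult.commute)
  finally show ?thesis .
qed

lemma adj_commute_sign:
  assumes A: "A \<in> carrier_mat n n" and X: "X \<in> carrier_mat n n" and "adj X = X"
    and s: "s \<in> {1, -1}" and "A * X = s \<cdot>\<^sub>m (X * A)"
  shows "adj A * X = s \<cdot>\<^sub>m (X * adj A)"
proof -
  have "cnj s = s" "s * s = 1" using s by auto
  have "X * adj A = adj (A * X)"
    using A X \<open>adj X = X\<close> by (simp add: adj_mult[of _ n n])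
  also have "\<dots> = s \<cdot>\<^sub>m (adj A * X)"
    using A X assms(3,5) \<open>cnj s = s\<close> by (simp add: adj_smult adj_mult[of _ n n])
  finally have "s \<cdot>\<^sub>m (X * adj A) = (s * s) \<cdot>\<^sub>m (adj A * X)"
    by (simp add: smult_smult_mat)
  then show ?thesis using \<open>s * s = 1\<close> by simp
qed

section \<open>Pauli strings\<close>

lemma less_4_cases: "(n::nat) < 4 \<Longrightarrow> n = 0 \<or> n = 1 \<or> n = 2 \<or> n = 3"
  by auto

(* The single-qubit product table: sigma_a sigma_b = pauli1_mult_phase a b * sigma_c with
   c = pauli1_mult_index a b; for distinct non-identity a, b the index c is the third one, 6 - a - b. *)

definition pauli1_mult_index :: "nat \<Rightarrow> nat \<Rightarrow> nat" where
  "pauli1_mult_index a b = (if a = 0 then b else if b = 0 then a else if a = b then 0 else 6 - a - b)"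

definition pauli1_mult_phase :: "nat \<Rightarrow> nat \<Rightarrow> complex" where
  "pauli1_mult_phase a b =
     (if a = 0 \<or> b = 0 \<or> a = b then 1
      else if (a, b) \<in> {(1, 2), (2, 3), (3, 1)} then \<i> else - \<i>)"

definition pauli_phases :: "complex set" where
  "pauli_phases = {1, -1, \<i>, - \<i>}"

lemma pauli1_mult_index_less: "a < 4 \<Longrightarrow> b < 4 \<Longrightarrow> pauli1_mult_index a b < 4"
  using less_4_cases[of a] less_4_cases[of b] by (auto simp: pauli1_mult_index_def)

lemma pauli1_mult_phase_in: "pauli1_mult_phase a b \<in> pauli_phases"
  by (auto simp: pauli1_mult_phase_def pauli_phases_def)

lemma pauli1_mult_phase_swap:
  "a < 4 \<Longrightarrow> b < 4 \<Longrightarrow> pauli1_mult_phase a b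
     = (if a = 0 \<or> b = 0 \<or> a = b then 1 else -1) * pauli1_mult_phase b a"
  using less_4_cases[of a] less_4_cases[of b] by (auto simp: pauli1_mult_phase_def)

lemma pauli1_mult:
  assumes "a < 4" "b < 4" "x < 2" "y < 2"
  shows "pauli1 a x 0 * pauli1 b 0 y + pauli1 a x 1 * pauli1 b 1 y
    = pauli1_mult_phase a b * pauli1 (pauli1_mult_index a b) x y"
  using less_4_cases[OF assms(1)] less_4_cases[OF assms(2)]
    less_2_cases[OF assms(3)] less_2_cases[OF assms(4)]
  by (elim disjE) (simp_all add: pauli1_def pauli1_mult_phase_def pauli1_mult_index_def)

lemma pauli1_cnj: "k < 4 \<Longrightarrow> a < 2 \<Longrightarrow> b < 2 \<Longrightarrow> cnj (pauli1 k b a) = pauli1 k a b"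
  using less_4_cases[of k] less_2_cases[of a] less_2_cases[of b]
  by (auto simp: pauli1_def)

lemma one_in_pauli_phases: "1 \<in> pauli_phases"
  by (simp add: pauli_phases_def)

lemma pauli_phases_mult: "a \<in> pauli_phases \<Longrightarrow> b \<in> pauli_phases \<Longrightarrow> a * b \<in> pauli_phases"
  by (auto simp: pauli_phases_def)

lemma cnj_in_pauli_phases: "a \<in> pauli_phases \<Longrightarrow> cnj a \<in> pauli_phases"
  by (auto simp: pauli_phases_def)

lemma cnj_mult_self_pauli_phase: "a \<in> pauli_phases \<Longrightarrow> cnj a * a = 1"
  by (auto simp: pauli_phases_def)

lemma cnj_pauli_phase_cases: "a \<in> pauli_phases \<Longrightarrow> cnj a = a \<or> cnj a = - a"
  by (auto simp: pauli_phases_def)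

lemma pauli_string_carrier [simp]: "pauli_string t p \<in> carrier_mat (2 ^ t) (2 ^ t)"
  by (simp add: pauli_string_def)

lemma dim_pauli_string [simp]:
  "dim_row (pauli_string t p) = 2 ^ t" "dim_col (pauli_string t p) = 2 ^ t"
  by (simp_all add: pauli_string_def)

lemma pauli_string_mult:
  assumes "\<forall>j<t. p j < 4" "\<forall>j<t. q j < 4"
  shows "pauli_string t p * pauli_string t q
    = (\<Prod>j<t. pauli1_mult_phase (p j) (q j)) \<cdot>\<^sub>m pauli_string t (\<lambda>j. pauli1_mult_index (p j) (q j))"
    (is "_ = ?R")
proof (rule eq_matI)
  fix r c assume "r < dim_row ?R" "c < dim_col ?R"
  then have r: "r < 2 ^ t" and c: "c < 2 ^ t" by auto
  define f where "f j b = pauli1 (p j) (qbit j r) b * pauli1 (q j) b (qbit j c)" for j b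
  have "(pauli_string t p * pauli_string t q) $$ (r, c)
      = (\<Sum>k<2 ^ t. (\<Prod>j<t. pauli1 (p j) (qbit j r) (qbit j k)) * (\<Prod>j<t. pauli1 (q j) (qbit j k) (qbit j c)))"
    using r c by (simp add: scalar_prod_def pauli_string_def lessThan_atLeast0 row_def col_def)
  also have "\<dots> = (\<Sum>k<2 ^ t. \<Prod>j<t. f j (qbit j k))"
    by (simp add: f_def prod.distrib)
  also have "\<dots> = (\<Prod>j<t. f j 0 + f j 1)"
    by (rule sum_prod_qbit)
  also have "\<dots> = (\<Prod>j<t. pauli1_mult_phase (p j) (q j) * pauli1 (pauli1_mult_index (p j) (q j)) (qbit j r) (qbit j c))"
    unfolding f_def using assms by (intro prod.cong refl pauli1_mult) (auto simp: qbit_less_2)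
  also have "\<dots> = ?R $$ (r, c)"
    using r c by (simp add: pauli_string_def prod.distrib)
  finally show "(pauli_string t p * pauli_string t q) $$ (r, c) = ?R $$ (r, c)" .
qed auto

lemma pauli_string_mult_commute:
  assumes "\<forall>j<t. p j < 4" "\<forall>j<t. q j < 4"
  shows "\<exists>s \<in> {1, -1}. pauli_string t p * pauli_string t q = s \<cdot>\<^sub>m (pauli_string t q * pauli_string t p)"
proof -
  define e where "e j = (if p j = 0 \<or> q j = 0 \<or> p j = q j then 1 else -1 :: complex)" for j
  have "(\<Prod>j<t. e j) \<in> {1, -1}"
    by (rule prod_mem_if_mult_closed) (auto simp: e_def)
  moreover have "pauli_string t p * pauli_string t q
      = (\<Prod>j<t. e j * pauli1_mult_phase (q j) (p j)) \<cdot>\<^sub>m pauli_string t (\<lambda>j. pauli1_mult_index (q j) (p j))"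
  proof -
    have "(\<Prod>j<t. pauli1_mult_phase (p j) (q j)) = (\<Prod>j<t. e j * pauli1_mult_phase (q j) (p j))"
    proof (rule prod.cong)
      fix j assume "j \<in> {..<t}"
      then show "pauli1_mult_phase (p j) (q j) = e j * pauli1_mult_phase (q j) (p j)"
        using assms pauli1_mult_phase_swap[of "p j" "q j"] by (simp add: e_def)
    qed simp
    moreover have "pauli1_mult_index (q j) (p j) = pauli1_mult_index (p j) (q j)" for j
      by (auto simp: pauli1_mult_index_def)
    ultimately show ?thesis
      using pauli_string_mult[OF assms] by simp
  qed
  then have "pauli_string t p * pauli_string t q = (\<Prod>j<t. e j) \<cdot>\<^sub>m (pauli_string t q * pauli_string t p)"
    using pauli_string_mult[OF assms(2,1)] by (simp add: prod.distrib smult_smult_mat)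
  ultimately show ?thesis by (rule bexI[rotated])
qed

lemma adj_pauli_string: "\<forall>j<t. p j < 4 \<Longrightarrow> adj (pauli_string t p) = pauli_string t p"
  by (intro eq_matI) (auto simp: pauli_string_def pauli1_cnj qbit_less_2 intro!: prod.cong)

lemma prod_indicator_lessThan:
  "(\<Prod>i<(t::nat). if P i then (1::'a::comm_ring_1) else 0) = (if \<forall>i<t. P i then 1 else 0)"
  by (induction t) (auto simp: less_Suc_eq)

lemma pauli_string_identity: "pauli_string t (\<lambda>_. 0) = 1\<^sub>m (2 ^ t)"
proof (rule eq_matI)
  fix r c assume "r < dim_row (1\<^sub>m (2 ^ t) :: complex mat)" "c < dim_col (1\<^sub>m (2 ^ t) :: complex mat)"
  then have rc: "r < 2 ^ t" "c < 2 ^ t" by auto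
  have "pauli_string t (\<lambda>_. 0) $$ (r, c) = (\<Prod>i<t. if qbit i r = qbit i c then 1 else 0)"
    using rc by (simp add: pauli_string_def pauli1_def)
  also have "\<dots> = (if r = c then 1 else 0)"
    using rc eq_if_qbits_eq[of r t c] by (simp add: prod_indicator_lessThan)
  finally show "pauli_string t (\<lambda>_. 0) $$ (r, c) = 1\<^sub>m (2 ^ t) $$ (r, c)"
    using rc by simp
qed auto

lemma pauli_string_mult_self:
  assumes "\<forall>j<t. p j < 4"
  shows "pauli_string t p * pauli_string t p = 1\<^sub>m (2 ^ t)"
proof -
  have "pauli1_mult_phase a a = 1" "pauli1_mult_index a a = 0" for a
    by (simp_all add: pauli1_mult_phase_def pauli1_mult_index_def)
  then show ?thesis
    using pauli_string_mult[OF assms assms] by (simp add: pauli_string_identity)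
qed

lemma is_pauli_iff:
  "is_pauli t M \<longleftrightarrow> (\<exists>c p. c \<in> pauli_phases \<and> (\<forall>j<t. p j < 4) \<and> M = c \<cdot>\<^sub>m pauli_string t p)"
  by (simp add: is_pauli_def pauli_phases_def)

lemma is_pauli_carrier: "is_pauli t M \<Longrightarrow> M \<in> carrier_mat (2 ^ t) (2 ^ t)"
  by (auto simp: is_pauli_def)

lemma is_pauli_mult:
  assumes "is_pauli t A" "is_pauli t B"
  shows "is_pauli t (A * B)"
proof -
  obtain a p where a: "a \<in> pauli_phases" "\<forall>j<t. p j < 4" "A = a \<cdot>\<^sub>m pauli_string t p"
    using assms(1) by (auto simp: is_pauli_iff)
  obtain b q where b: "b \<in> pauli_phases" "\<forall>j<t. q j < 4" "B = b \<cdot>\<^sub>m pauli_string t q"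
    using assms(2) by (auto simp: is_pauli_iff)
  have "A * B = (a * b) \<cdot>\<^sub>m (pauli_string t p * pauli_string t q)"
    using a b by (simp add: smult_mult_smult_mat[OF pauli_string_carrier pauli_string_carrier])
  also have "\<dots> = (a * b * (\<Prod>j<t. pauli1_mult_phase (p j) (q j)))
      \<cdot>\<^sub>m pauli_string t (\<lambda>j. pauli1_mult_index (p j) (q j))"
    using pauli_string_mult[OF a(2) b(2)] by (simp add: smult_smult_mat)
  finally have "A * B = \<dots>" .
  moreover have "(\<Prod>j<t. pauli1_mult_phase (p j) (q j)) \<in> pauli_phases"
    by (rule prod_mem_if_mult_closed[OF one_in_pauli_phases pauli_phases_mult pauli1_mult_phase_in])
  then have "a * b * (\<Prod>j<t. pauli1_mult_phase (p j) (q j)) \<in> pauli_phases"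
    using a(1) b(1) by (simp add: pauli_phases_mult)
  moreover have "\<forall>j<t. pauli1_mult_index (p j) (q j) < 4"
    using a(2) b(2) by (simp add: pauli1_mult_index_less)
  ultimately show ?thesis
    unfolding is_pauli_iff by (intro exI conjI)
qed

lemma adj_is_pauli_sign:
  assumes "is_pauli t A"
  shows "\<exists>s \<in> {1, -1}. adj A = s \<cdot>\<^sub>m A"
proof -
  obtain a p where a: "a \<in> pauli_phases" "\<forall>j<t. p j < 4" "A = a \<cdot>\<^sub>m pauli_string t p"
    using assms by (auto simp: is_pauli_iff)
  then have "adj A = cnj a \<cdot>\<^sub>m pauli_string t p"
    by (simp add: adj_smult adj_pauli_string)
  moreover note cnj_pauli_phase_cases[OF a(1)]
  ultimately have "adj A = 1 \<cdot>\<^sub>m A \<or> adj A = (-1) \<cdot>\<^sub>m A"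
    using a(3) by (auto simp: smult_smult_mat)
  then show ?thesis by blast
qed

lemma is_pauli_adj:
  assumes "is_pauli t A"
  shows "is_pauli t (adj A)"
proof -
  obtain a p where a: "a \<in> pauli_phases" "\<forall>j<t. p j < 4" "A = a \<cdot>\<^sub>m pauli_string t p"
    using assms by (auto simp: is_pauli_iff)
  then have "adj A = cnj a \<cdot>\<^sub>m pauli_string t p"
    by (simp add: adj_smult adj_pauli_string)
  moreover note cnj_in_pauli_phases[OF a(1)]
  ultimately show ?thesis
    unfolding is_pauli_iff using a(2) by (intro exI conjI)
qed

lemma is_pauli_unitary:
  assumes "is_pauli t A"
  shows "unitary_op t A"
proof -
  obtain a p where a: "a \<in> pauli_phases" "\<forall>j<t. p j < 4" "A = a \<cdot>\<^sub>m pauli_string t p"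
    using assms by (auto simp: is_pauli_iff)
  then have "adj A = cnj a \<cdot>\<^sub>m pauli_string t p"
    by (simp add: adj_smult adj_pauli_string)
  then have "A * adj A = (a * cnj a) \<cdot>\<^sub>m (pauli_string t p * pauli_string t p)"
    and "adj A * A = (cnj a * a) \<cdot>\<^sub>m (pauli_string t p * pauli_string t p)"
    using a by (simp_all add: smult_mult_smult_mat[OF pauli_string_carrier pauli_string_carrier])
  moreover have "a * cnj a = 1" "cnj a * a = 1"
    using cnj_mult_self_pauli_phase[OF a(1)] by (simp_all add: mult.commute)
  ultimately show ?thesis
    unfolding unitary_op_def using a by (simp add: pauli_string_mult_self)
qed

lemma is_pauli_commute_sign:
  assumes "is_pauli t A" "is_pauli t B"
  shows "\<exists>s \<in> {1, -1}. A * B = s \<cdot>\<^sub>m (B * A)"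
proof -
  obtain a p where a: "a \<in> pauli_phases" "\<forall>j<t. p j < 4" "A = a \<cdot>\<^sub>m pauli_string t p"
    using assms(1) by (auto simp: is_pauli_iff)
  obtain b q where b: "b \<in> pauli_phases" "\<forall>j<t. q j < 4" "B = b \<cdot>\<^sub>m pauli_string t q"
    using assms(2) by (auto simp: is_pauli_iff)
  obtain s where s: "s \<in> {1, -1}"
    "pauli_string t p * pauli_string t q = s \<cdot>\<^sub>m (pauli_string t q * pauli_string t p)"
    using pauli_string_mult_commute[OF a(2) b(2)] by blast
  have "A * B = (a * b) \<cdot>\<^sub>m (pauli_string t p * pauli_string t q)"
    and "B * A = (a * b) \<cdot>\<^sub>m (pauli_string t q * pauli_string t p)"
    using a b by (simp_all add: smult_mult_smult_mat[OF pauli_string_carrier pauli_string_carrier]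
        mult.commute)
  then have "A * B = s \<cdot>\<^sub>m (B * A)"
    using s by (simp add: smult_smult_mat mult.commute)
  with s(1) show ?thesis by (rule bexI[rotated])
qed

section \<open>Acting trivially on one qubit\<close>

definition pauli_X_at :: "nat \<Rightarrow> nat \<Rightarrow> complex mat" where
  "pauli_X_at t j = pauli_string t (\<lambda>i. if i = j then 1 else 0)"

definition pauli_Z_at :: "nat \<Rightarrow> nat \<Rightarrow> complex mat" where
  "pauli_Z_at t j = pauli_string t (\<lambda>i. if i = j then 3 else 0)"

definition z_sign :: "nat \<Rightarrow> nat \<Rightarrow> complex" where
  "z_sign j r = (if qbit j r = 0 then 1 else -1)"

lemma pauli_X_at_carrier [simp]: "pauli_X_at t j \<in> carrier_mat (2 ^ t) (2 ^ t)"
  by (simp add: pauli_X_at_def)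

lemma pauli_Z_at_carrier [simp]: "pauli_Z_at t j \<in> carrier_mat (2 ^ t) (2 ^ t)"
  by (simp add: pauli_Z_at_def)

lemma dim_pauli_X_Z_at [simp]:
  "dim_row (pauli_X_at t j) = 2 ^ t" "dim_col (pauli_X_at t j) = 2 ^ t"
  "dim_row (pauli_Z_at t j) = 2 ^ t" "dim_col (pauli_Z_at t j) = 2 ^ t"
  by (simp_all add: pauli_X_at_def pauli_Z_at_def)

lemma is_pauli_X_at: "is_pauli t (pauli_X_at t j)"
  unfolding is_pauli_def pauli_X_at_def by (intro exI[of _ 1] exI[of _ "\<lambda>i. if i = j then 1 else 0"]) auto

lemma is_pauli_Z_at: "is_pauli t (pauli_Z_at t j)"
  unfolding is_pauli_def pauli_Z_at_def by (intro exI[of _ 1] exI[of _ "\<lambda>i. if i = j then 3 else 0"]) auto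

lemma adj_pauli_X_at: "adj (pauli_X_at t j) = pauli_X_at t j"
  unfolding pauli_X_at_def by (rule adj_pauli_string) auto

lemma adj_pauli_Z_at: "adj (pauli_Z_at t j) = pauli_Z_at t j"
  unfolding pauli_Z_at_def by (rule adj_pauli_string) auto

lemma index_pauli_X_at:
  assumes "j < t" "r < 2 ^ t" "c < 2 ^ t"
  shows "pauli_X_at t j $$ (r, c) = (if c = flip_bit j r then 1 else 0)"
proof -
  have "pauli_X_at t j $$ (r, c) = (\<Prod>i<t. pauli1 (if i = j then 1 else 0) (qbit i r) (qbit i c))"
    using assms by (simp add: pauli_X_at_def pauli_string_def)
  also have "\<dots> = (\<Prod>i<t. if qbit i c = qbit i (flip_bit j r) then 1 else 0)"
    by (intro prod.cong refl)
      (cases rule: qbit_cases[of j r]; cases rule: qbit_cases[of j c]; auto simp: pauli1_def qbit_flip_bit)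
  also have "\<dots> = (if c = flip_bit j r then 1 else 0)"
    using eq_if_qbits_eq[OF assms(3) flip_bit_less[OF assms(1,2)]]
    by (auto simp: prod_indicator_lessThan)
  finally show ?thesis .
qed

lemma index_pauli_Z_at:
  assumes "j < t" "r < 2 ^ t" "c < 2 ^ t"
  shows "pauli_Z_at t j $$ (r, c) = (if r = c then z_sign j r else 0)"
proof -
  have "pauli_Z_at t j $$ (r, c) = (\<Prod>i<t. pauli1 (if i = j then 3 else 0) (qbit i r) (qbit i c))"
    using assms by (simp add: pauli_Z_at_def pauli_string_def)
  also have "\<dots> = (\<Prod>i<t. (if qbit i c = qbit i r then 1 else 0) * (if i = j then z_sign j r else 1))"
    by (intro prod.cong refl)
      (cases rule: qbit_cases[of j r]; cases rule: qbit_cases[of j c]; auto simp: pauli1_def z_sign_def)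
  also have "\<dots> = (if \<forall>i<t. qbit i c = qbit i r then 1 else 0) * z_sign j r"
    using assms(1) by (simp add: prod.distrib prod_indicator_lessThan prod.delta)
  also have "\<dots> = (if r = c then z_sign j r else 0)"
    using eq_if_qbits_eq[OF assms(3,2)] by auto
  finally show ?thesis .
qed

lemma index_mult_pauli_X_at:
  assumes "M \<in> carrier_mat m (2 ^ t)" "j < t" "r < m" "c < 2 ^ t"
  shows "(M * pauli_X_at t j) $$ (r, c) = M $$ (r, flip_bit j c)"
proof -
  have "(M * pauli_X_at t j) $$ (r, c) = (\<Sum>k\<in>{0..<2 ^ t}. M $$ (r, k) * pauli_X_at t j $$ (k, c))"
    using assms by (simp add: scalar_prod_def carrier_matD)
  also have "\<dots> = (\<Sum>k\<in>{0..<2 ^ t}. if k = flip_bit j c then M $$ (r, k) else 0)"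
    using assms by (intro sum.cong refl) (auto simp: index_pauli_X_at)
  finally show ?thesis
    using flip_bit_less[OF assms(2,4)] by simp
qed

lemma index_pauli_X_at_mult:
  assumes "M \<in> carrier_mat (2 ^ t) m" "j < t" "r < 2 ^ t" "c < m"
  shows "(pauli_X_at t j * M) $$ (r, c) = M $$ (flip_bit j r, c)"
proof -
  have "(pauli_X_at t j * M) $$ (r, c) = (\<Sum>k\<in>{0..<2 ^ t}. pauli_X_at t j $$ (r, k) * M $$ (k, c))"
    using assms by (simp add: scalar_prod_def carrier_matD)
  also have "\<dots> = (\<Sum>k\<in>{0..<2 ^ t}. if k = flip_bit j r then M $$ (k, c) else 0)"
    using assms by (intro sum.cong refl) (auto simp: index_pauli_X_at)
  finally show ?thesis
    using flip_bit_less[OF assms(2,3)] by simp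
qed

lemma index_mult_pauli_Z_at:
  assumes "M \<in> carrier_mat m (2 ^ t)" "j < t" "r < m" "c < 2 ^ t"
  shows "(M * pauli_Z_at t j) $$ (r, c) = M $$ (r, c) * z_sign j c"
proof -
  have "(M * pauli_Z_at t j) $$ (r, c) = (\<Sum>k\<in>{0..<2 ^ t}. M $$ (r, k) * pauli_Z_at t j $$ (k, c))"
    using assms by (simp add: scalar_prod_def carrier_matD)
  also have "\<dots> = (\<Sum>k\<in>{0..<2 ^ t}. if k = c then M $$ (r, k) * z_sign j c else 0)"
    using assms by (intro sum.cong refl) (auto simp: index_pauli_Z_at)
  finally show ?thesis
    using assms(4) by simp
qed

lemma index_pauli_Z_at_mult:
  assumes "M \<in> carrier_mat (2 ^ t) m" "j < t" "r < 2 ^ t" "c < m"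
  shows "(pauli_Z_at t j * M) $$ (r, c) = z_sign j r * M $$ (r, c)"
proof -
  have "(pauli_Z_at t j * M) $$ (r, c) = (\<Sum>k\<in>{0..<2 ^ t}. pauli_Z_at t j $$ (r, k) * M $$ (k, c))"
    using assms by (simp add: scalar_prod_def carrier_matD)
  also have "\<dots> = (\<Sum>k\<in>{0..<2 ^ t}. if k = r then z_sign j r * M $$ (k, c) else 0)"
    using assms by (intro sum.cong refl) (auto simp: index_pauli_Z_at)
  finally show ?thesis
    using assms(3) by simp
qed

lemma tensor_id_at_carrier [simp]: "tensor_id_at t j W \<in> carrier_mat (2 ^ t) (2 ^ t)"
  by (simp add: tensor_id_at_def)

lemma dim_tensor_id_at [simp]:
  "dim_row (tensor_id_at t j W) = 2 ^ t" "dim_col (tensor_id_at t j W) = 2 ^ t"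
  by (simp_all add: tensor_id_at_def)

lemma index_tensor_id_at:
  "r < 2 ^ t \<Longrightarrow> c < 2 ^ t \<Longrightarrow> tensor_id_at t j W $$ (r, c)
     = (if qbit j r = qbit j c then W $$ (del_bit j r, del_bit j c) else 0)"
  by (simp add: tensor_id_at_def)

lemma z_sign_eq_iff: "z_sign j r = z_sign j c \<longleftrightarrow> qbit j r = qbit j c"
  by (cases rule: qbit_cases[of j r]; cases rule: qbit_cases[of j c]) (auto simp: z_sign_def)

lemma tensor_id_at_commute_pauli_X_at:
  assumes "j < t"
  shows "tensor_id_at t j W * pauli_X_at t j = pauli_X_at t j * tensor_id_at t j W"
    (is "?T * ?X = ?X * ?T")
proof (rule eq_matI)
  fix r c assume "r < dim_row (?X * ?T)" "c < dim_col (?X * ?T)"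
  then have rc: "r < 2 ^ t" "c < 2 ^ t" by auto
  have "(?T * ?X) $$ (r, c) = ?T $$ (r, flip_bit j c)"
    by (rule index_mult_pauli_X_at[OF tensor_id_at_carrier assms rc])
  also have "\<dots> = ?T $$ (flip_bit j r, c)"
    using rc flip_bit_less[OF assms]
    by (cases rule: qbit_cases[of j r]; cases rule: qbit_cases[of j c])
      (auto simp: index_tensor_id_at qbit_flip_bit del_bit_flip_bit)
  also have "\<dots> = (?X * ?T) $$ (r, c)"
    by (rule index_pauli_X_at_mult[OF tensor_id_at_carrier assms rc, symmetric])
  finally show "(?T * ?X) $$ (r, c) = (?X * ?T) $$ (r, c)" .
qed auto

lemma tensor_id_at_commute_pauli_Z_at:
  assumes "j < t"
  shows "tensor_id_at t j W * pauli_Z_at t j = pauli_Z_at t j * tensor_id_at t j W"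
    (is "?T * ?Z = ?Z * ?T")
proof (rule eq_matI)
  fix r c assume "r < dim_row (?Z * ?T)" "c < dim_col (?Z * ?T)"
  then have rc: "r < 2 ^ t" "c < 2 ^ t" by auto
  have "(?T * ?Z) $$ (r, c) = ?T $$ (r, c) * z_sign j c"
    by (rule index_mult_pauli_Z_at[OF tensor_id_at_carrier assms rc])
  also have "\<dots> = z_sign j r * ?T $$ (r, c)"
    using rc z_sign_eq_iff[of j r c] by (auto simp: index_tensor_id_at)
  also have "\<dots> = (?Z * ?T) $$ (r, c)"
    by (rule index_pauli_Z_at_mult[OF tensor_id_at_carrier assms rc, symmetric])
  finally show "(?T * ?Z) $$ (r, c) = (?Z * ?T) $$ (r, c)" .
qed auto

text \<open>Conversely, commuting with X and Z on qubit j forces the block form of tensor_id_at: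
  Z makes the entries between different values of bit j vanish, X makes the two diagonal
  blocks equal, and the block for bit j = 0 is read off via insert_zero_bit.\<close>

lemma acts_trivially_on_if_commute_pauli_X_Z_at:
  assumes j: "j < t" and M: "M \<in> carrier_mat (2 ^ t) (2 ^ t)"
    and X: "M * pauli_X_at t j = pauli_X_at t j * M"
    and Z: "M * pauli_Z_at t j = pauli_Z_at t j * M"
  shows "acts_trivially_on t j M"
proof -
  define W where "W = mat (2 ^ (t - 1)) (2 ^ (t - 1)) (\<lambda>(a, b). M $$ (insert_zero_bit j a, insert_zero_bit j b))"
  have flip_invariant: "M $$ (flip_bit j r, flip_bit j c) = M $$ (r, c)"
    if rc: "r < 2 ^ t" "c < 2 ^ t" for r c
    using index_mult_pauli_X_at[OF M j rc(1) flip_bit_less[OF j rc(2)]]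
      index_pauli_X_at_mult[OF M j rc(1) flip_bit_less[OF j rc(2)]] X
    by simp
  have off_block_zero: "M $$ (r, c) = 0"
    if rc: "r < 2 ^ t" "c < 2 ^ t" and ne: "qbit j r \<noteq> qbit j c" for r c
  proof -
    have "M $$ (r, c) * z_sign j c = z_sign j r * M $$ (r, c)"
      using index_mult_pauli_Z_at[OF M j rc] index_pauli_Z_at_mult[OF M j rc] Z by metis
    moreover have "z_sign j r = - z_sign j c" "z_sign j c \<noteq> 0"
      using ne by (cases rule: qbit_cases[of j r]; cases rule: qbit_cases[of j c]; simp add: z_sign_def)+
    ultimately show ?thesis by auto
  qed
  have "M = tensor_id_at t j W"
  proof (rule eq_matI)
    fix r c assume "r < dim_row (tensor_id_at t j W)" "c < dim_col (tensor_id_at t j W)"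
    then have rc: "r < 2 ^ t" "c < 2 ^ t" by (auto simp: tensor_id_at_def)
    show "M $$ (r, c) = tensor_id_at t j W $$ (r, c)"
    proof (cases "qbit j r = qbit j c")
      case True
      have "tensor_id_at t j W $$ (r, c) = M $$ (unset_bit j r, unset_bit j c)"
        using True rc del_bit_less[OF j]
        by (simp add: index_tensor_id_at W_def insert_zero_bit_del_bit)
      also have "\<dots> = M $$ (r, c)"
        using True flip_invariant[OF rc]
        by (cases rule: qbit_cases[of j r]) (simp_all add: unset_bit_eq_self unset_bit_eq_flip_bit)
      finally show ?thesis by simp
    next
      case False
      then show ?thesis using off_block_zero[OF rc] rc by (simp add: index_tensor_id_at)
    qed
  qed (use M in \<open>auto simp: tensor_id_at_def\<close>)
  moreover have "W \<in> carrier_mat (2 ^ (t - 1)) (2 ^ (t - 1))"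
    by (simp add: W_def)
  ultimately show ?thesis
    unfolding acts_trivially_on_def by blast
qed

section \<open>The commutator of a Clifford and a Pauli\<close>

definition commutator :: "complex mat \<Rightarrow> complex mat \<Rightarrow> complex mat" where
  "commutator U V = U * V * adj U * adj V"

lemma commutator_carrier [simp]:
  "U \<in> carrier_mat n n \<Longrightarrow> V \<in> carrier_mat n n \<Longrightarrow> commutator U V \<in> carrier_mat n n"
  unfolding commutator_def by (intro mult_carrier_mat adj_carrier_mat)

lemma commutator_commute_hermitian:
  assumes C: "C \<in> carrier_mat n n" and P: "P \<in> carrier_mat n n" and X: "X \<in> carrier_mat n n"
    and "adj X = X" and "C * X = X * C" and s: "s \<in> {1, -1}" and "P * X = s \<cdot>\<^sub>m (X * P)"
  shows "commutator C P * X = X * commutator C P"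
proof -
  have CX: "C * X = 1 \<cdot>\<^sub>m (X * C)"
    using assms(5) by simp
  have adjCX: "adj C * X = 1 \<cdot>\<^sub>m (X * adj C)"
    by (rule adj_commute_sign[OF C X assms(4) _ CX]) simp
  have adjPX: "adj P * X = s \<cdot>\<^sub>m (X * adj P)"
    by (rule adj_commute_sign[OF P X assms(4) s assms(7)])
  have CPX: "(C * P) * X = (1 * s) \<cdot>\<^sub>m (X * (C * P))"
    by (rule mult_commute_sign_mult[OF C P X CX assms(7)])
  have CPCX: "(C * P * adj C) * X = (1 * s * 1) \<cdot>\<^sub>m (X * (C * P * adj C))"
    by (rule mult_commute_sign_mult[OF _ _ X CPX adjCX])
      (use C P in \<open>simp_all add: square_mat_mult_closed\<close>)
  have "(C * P * adj C * adj P) * X = (1 * s * 1 * s) \<cdot>\<^sub>m (X * (C * P * adj C * adj P))"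
    by (rule mult_commute_sign_mult[OF _ _ X CPCX adjPX])
      (use C P in \<open>simp_all add: square_mat_mult_closed\<close>)
  moreover have "1 * s * 1 * s = 1"
    using s by auto
  ultimately show ?thesis
    by (simp add: commutator_def)
qed

lemma Supp_commutator_subset:
  assumes C: "C \<in> carrier_mat (2 ^ t) (2 ^ t)" and P: "is_pauli t P"
  shows "Supp t (commutator C P) \<subseteq> Supp t C"
proof -
  have "acts_trivially_on t j (commutator C P)" if j: "j < t" and "acts_trivially_on t j C" for j
  proof -
    obtain W where W: "C = tensor_id_at t j W"
      using \<open>acts_trivially_on t j C\<close> by (auto simp: acts_trivially_on_def)
    obtain sx where "sx \<in> {1, -1}" "P * pauli_X_at t j = sx \<cdot>\<^sub>m (pauli_X_at t j * P)"
      using is_pauli_commute_sign[OF P is_pauli_X_at] by blast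
    then have "commutator C P * pauli_X_at t j = pauli_X_at t j * commutator C P"
      using W tensor_id_at_commute_pauli_X_at[OF j] is_pauli_carrier[OF P] adj_pauli_X_at
      by (intro commutator_commute_hermitian[OF C]) auto
    moreover obtain sz where "sz \<in> {1, -1}" "P * pauli_Z_at t j = sz \<cdot>\<^sub>m (pauli_Z_at t j * P)"
      using is_pauli_commute_sign[OF P is_pauli_Z_at] by blast
    then have "commutator C P * pauli_Z_at t j = pauli_Z_at t j * commutator C P"
      using W tensor_id_at_commute_pauli_Z_at[OF j] is_pauli_carrier[OF P] adj_pauli_Z_at
      by (intro commutator_commute_hermitian[OF C]) auto
    ultimately show ?thesis
      using C is_pauli_carrier[OF P] by (intro acts_trivially_on_if_commute_pauli_X_Z_at[OF j]) auto
  qed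
  then show ?thesis by (auto simp: Supp_def)
qed

lemma is_pauli_commutator:
  assumes "is_clifford t C" "is_pauli t P"
  shows "is_pauli t (commutator C P)"
proof -
  have "is_pauli t (C * P * adj C)"
    using assms by (simp add: is_clifford_def)
  then show ?thesis
    unfolding commutator_def using is_pauli_adj[OF assms(2)] by (rule is_pauli_mult)
qed

lemma commutator_mult_mult:
  assumes "unitary_op t C" "unitary_op t P"
  shows "commutator C P * P * C = C * P"
proof -
  have C: "C \<in> carrier_mat (2 ^ t) (2 ^ t)" and P: "P \<in> carrier_mat (2 ^ t) (2 ^ t)"
    using assms by (auto simp: unitary_op_def)
  note assoc = square_mat_mult_assoc[where n = "2 ^ t"] square_mat_mult_closed[where n = "2 ^ t"]
  have "commutator C P * P * C = C * P * adj C * (adj P * P) * C"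
    using C P by (simp add: commutator_def assoc)
  also have "\<dots> = C * P * (adj C * C)"
    using assms(2) C P by (simp add: unitary_op_def assoc)
  also have "\<dots> = C * P"
    using assms(1) C P by (simp add: unitary_op_def)
  finally show ?thesis .
qed

lemma ctrl_mult_id_tensor:
  assumes "U \<in> carrier_mat (2 ^ t) (2 ^ t)" "P \<in> carrier_mat (2 ^ t) (2 ^ t)"
  shows "ctrl t U * id_tensor t P = four_block_mat P (0\<^sub>m (2 ^ t) (2 ^ t)) (0\<^sub>m (2 ^ t) (2 ^ t)) (U * P)"
  using assms unfolding ctrl_def id_tensor_def by (subst mult_four_block_mat) auto

lemma block_diag_mult_ctrl:
  assumes "A \<in> carrier_mat (2 ^ t) (2 ^ t)" "B \<in> carrier_mat (2 ^ t) (2 ^ t)"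
    "U \<in> carrier_mat (2 ^ t) (2 ^ t)"
  shows "four_block_mat A (0\<^sub>m (2 ^ t) (2 ^ t)) (0\<^sub>m (2 ^ t) (2 ^ t)) B * ctrl t U
    = four_block_mat A (0\<^sub>m (2 ^ t) (2 ^ t)) (0\<^sub>m (2 ^ t) (2 ^ t)) (B * U)"
  using assms unfolding ctrl_def by (subst mult_four_block_mat) auto

lemma ctrl_mult_id_tensor_commutator:
  assumes "unitary_op t C" "unitary_op t P"
  shows "ctrl t C * id_tensor t P = ctrl t (commutator C P) * id_tensor t P * ctrl t C"
proof -
  have C: "C \<in> carrier_mat (2 ^ t) (2 ^ t)" and P: "P \<in> carrier_mat (2 ^ t) (2 ^ t)"
    using assms by (auto simp: unitary_op_def)
  then have Q: "commutator C P \<in> carrier_mat (2 ^ t) (2 ^ t)" by simp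
  show ?thesis
    using ctrl_mult_id_tensor[OF C P] ctrl_mult_id_tensor[OF Q P]
      block_diag_mult_ctrl[OF P mult_carrier_mat[OF Q P] C] commutator_mult_mult[OF assms]
    by simp
qed

lemma unitary_op_cancel:
  assumes "unitary_op t U" "X \<in> carrier_mat (2 ^ t) m"
  shows "U * (adj U * X) = X" "adj U * (U * X) = X"
proof -
  have U: "U \<in> carrier_mat (2 ^ t) (2 ^ t)"
    using assms(1) by (simp add: unitary_op_def)
  have "U * (adj U * X) = (U * adj U) * X" "adj U * (U * X) = (adj U * U) * X"
    using U assms(2) by (simp_all add: assoc_mult_mat[symmetric, of _ "2 ^ t" "2 ^ t" _ "2 ^ t" _ m])
  then show "U * (adj U * X) = X" "adj U * (U * X) = X"
    using assms by (simp_all add: unitary_op_def)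
qed

lemma commutator_commute_or_anticommute:
  assumes "is_clifford t C" "is_pauli t (C * C)" "is_pauli t P"
  shows "commutator C P * C = C * commutator C P \<or> commutator C P * C = - (C * commutator C P)"
proof -
  let ?Q = "commutator C P"
  have uC: "unitary_op t C"
    using assms(1) by (simp add: is_clifford_def)
  then have C: "C \<in> carrier_mat (2 ^ t) (2 ^ t)"
    by (simp add: unitary_op_def)
  have P: "P \<in> carrier_mat (2 ^ t) (2 ^ t)"
    using assms(3) by (rule is_pauli_carrier)
  note assoc = square_mat_mult_assoc[where n = "2 ^ t"] square_mat_mult_closed[where n = "2 ^ t"]
  note cancel = unitary_op_cancel[where m = "2 ^ t", OF uC]
  obtain s1 where s1: "s1 \<in> {1, -1}" "C * C * P = s1 \<cdot>\<^sub>m (P * (C * C))"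
    using is_pauli_commute_sign[OF assms(2,3)] by blast
  obtain s2 where s2: "s2 \<in> {1, -1}" "adj ?Q = s2 \<cdot>\<^sub>m ?Q"
    using adj_is_pauli_sign[OF is_pauli_commutator[OF assms(1,3)]] by blast
  have "?Q = s2 \<cdot>\<^sub>m adj ?Q"
    using s2 by (auto simp: smult_smult_mat)
  then have "?Q * C = s2 \<cdot>\<^sub>m (adj ?Q * C)"
    using C P by (metis mult_smult_assoc_mat adj_carrier_mat commutator_carrier)
  also have "adj ?Q * C = P * (C * adj P)"
    using C P uC
    by (simp add: commutator_def adj_mult[of _ "2 ^ t" "2 ^ t" _ "2 ^ t"] assoc unitary_op_def)
  finally have QC: "?Q * C = s2 \<cdot>\<^sub>m (P * (C * adj P))" .
  have "C * ?Q = (C * C * P) * (adj C * adj P)"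
    using C P by (simp add: commutator_def assoc)
  also have "\<dots> = (s1 \<cdot>\<^sub>m (P * (C * C))) * (adj C * adj P)"
    by (simp only: s1(2))
  also have "\<dots> = s1 \<cdot>\<^sub>m ((P * (C * C)) * (adj C * adj P))"
    using C P by (intro mult_smult_assoc_mat) auto
  also have "(P * (C * C)) * (adj C * adj P) = P * (C * adj P)"
    using C P by (simp add: assoc cancel)
  finally have "C * ?Q = s1 \<cdot>\<^sub>m (P * (C * adj P))" .
  then have "P * (C * adj P) = s1 \<cdot>\<^sub>m (C * ?Q)"
    using s1(1) by (auto simp: smult_smult_mat)
  then have "?Q * C = (s2 * s1) \<cdot>\<^sub>m (C * ?Q)"
    using QC by (simp add: smult_smult_mat)
  then show ?thesis
    using s1(1) s2(1) by (auto simp: neg_one_smult_mat)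
qed

theorem proposition2:
  fixes t :: nat and C P :: "complex mat"
  assumes "is_PSC t C" and "is_pauli t P"
  shows "\<exists>Q. is_pauli t Q \<and>
           ctrl t C * id_tensor t P = ctrl t Q * id_tensor t P * ctrl t C \<and>
           (Q * C = C * Q \<or> Q * C = - (C * Q)) \<and>
           Supp t Q \<subseteq> Supp t C"
proof (intro exI conjI)
  have Clifford: "is_clifford t C" and square: "is_pauli t (C * C)"
    using assms(1) by (auto simp: is_PSC_def)
  then have unitary: "unitary_op t C"
    by (simp add: is_clifford_def)
  show "is_pauli t (commutator C P)"
    using Clifford assms(2) by (rule is_pauli_commutator)
  show "ctrl t C * id_tensor t P = ctrl t (commutator C P) * id_tensor t P * ctrl t C"
    using unitary is_pauli_unitary[OF assms(2)] by (rule ctrl_mult_id_tensor_commutator)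
  show "commutator C P * C = C * commutator C P \<or> commutator C P * C = - (C * commutator C P)"
    using Clifford square assms(2) by (rule commutator_commute_or_anticommute)
  show "Supp t (commutator C P) \<subseteq> Supp t C"
    using unitary assms(2) by (intro Supp_commutator_subset) (simp_all add: unitary_op_def)
qed

end
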